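(* Let $\mathbf G$ be a power-associative loop and $\Gamma^\pm=\mathcal G^\pm(\mathbf G)$. For each connected component $\Phi$ of $\Gamma^\pm$ that contains an element of infinite order, there exist connected components $\Psi_1,\Psi_2$ of $\mathcal G^+(\mathbf G)$ such that: (1) $V(\Phi)=V(\Psi_1)\cup V(\Psi_2)$; (2) $\Psi_1\cong\Psi_2$; (3) $\Phi\cong\Psi_1\boxtimes P_2$; (4) $\Psi_1\cong\Phi/\!\equiv_{\Gamma^\pm}$.
   Context: A loop is power-associative if every subloop generated by one element is a group; powers are computed in $\langle x\rangle$. The $Z^\pm$-power graph $\mathcal G^{\pm}(\mathbf G)$ has vertex set $G$, distinct $x,y$ adjacent iff $y=x^n$ or $x=y^n$ for some $n\in\mathbb Z\setminus\{0\}$; the $N$-power graph $\mathcal G^{+}(\mathbf G)$ is defined the same way with $n$ a positive integer. $P_2$ is the path on two vertices (a single edge). The strong product $\Gamma\boxtimes\Delta$ has vertex set $V(\Gamma)\times V(\Delta)$, with distinct $(x_1,y_1),(x_2,y_2)$ adjacent iff ($x_1=x_2$ or $x_1\sim x_2$) and ($y_1=y_2$ or $y_1\sim y_2$). For a graph $\Gamma$, $x\equiv_\Gamma y$ means $x,y$ have the same closed neighborhood in $\Gamma$; $\Phi/\!\equiv_{\Gamma^\pm}$ denotes the graph whose vertices are the $\equiv_{\Gamma^\pm}$-classes contained in $V(\Phi)$, two distinct classes being adjacent iff some (equivalently every) element of one is adjacent to some (every) element of the other. *)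

theory Defs
  imports Main
begin

definition loop :: "('a \<Rightarrow> 'a \<Rightarrow> 'a) \<Rightarrow> 'a \<Rightarrow> bool" where
  "loop m e \<longleftrightarrow> (\<forall>x. m e x = x \<and> m x e = x)
     \<and> (\<forall>a b. \<exists>!x. m a x = b) \<and> (\<forall>a b. \<exists>!y. m y a = b)"

definition ldiv :: "('a \<Rightarrow> 'a \<Rightarrow> 'a) \<Rightarrow> 'a \<Rightarrow> 'a \<Rightarrow> 'a" where
  "ldiv m a b = (THE x. m a x = b)"

definition rdiv :: "('a \<Rightarrow> 'a \<Rightarrow> 'a) \<Rightarrow> 'a \<Rightarrow> 'a \<Rightarrow> 'a" where
  "rdiv m b a = (THE y. m y a = b)"

inductive_set gen :: "('a \<Rightarrow> 'a \<Rightarrow> 'a) \<Rightarrow> 'a \<Rightarrow> 'a \<Rightarrow> 'a set"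
  for m :: "'a \<Rightarrow> 'a \<Rightarrow> 'a" and e :: 'a and x :: 'a where
  gen_base: "x \<in> gen m e x"
| gen_unit: "e \<in> gen m e x"
| gen_mult: "a \<in> gen m e x \<Longrightarrow> b \<in> gen m e x \<Longrightarrow> m a b \<in> gen m e x"
| gen_ldiv: "a \<in> gen m e x \<Longrightarrow> b \<in> gen m e x \<Longrightarrow> ldiv m a b \<in> gen m e x"
| gen_rdiv: "a \<in> gen m e x \<Longrightarrow> b \<in> gen m e x \<Longrightarrow> rdiv m a b \<in> gen m e x"

text \<open>Power-associative: every one-generated subloop is a group, i.e. its
  operation (a loop operation) is associative.\<close>
definition power_assoc :: "('a \<Rightarrow> 'a \<Rightarrow> 'a) \<Rightarrow> 'a \<Rightarrow> bool" where
  "power_assoc m e \<longleftrightarrow> (\<forall>x. \<forall>a\<in>gen m e x. \<forall>b\<in>gen m e x. \<forall>c\<in>gen m e x.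
      m (m a b) c = m a (m b c))"

primrec npow :: "('a \<Rightarrow> 'a \<Rightarrow> 'a) \<Rightarrow> 'a \<Rightarrow> 'a \<Rightarrow> nat \<Rightarrow> 'a" where
  "npow m e x 0 = e"
| "npow m e x (Suc n) = m (npow m e x n) x"

text \<open>Inverse of g: the unique z with z*g = e (in the group generated by x
  this is the group inverse).\<close>
definition linv :: "('a \<Rightarrow> 'a \<Rightarrow> 'a) \<Rightarrow> 'a \<Rightarrow> 'a \<Rightarrow> 'a" where
  "linv m e g = rdiv m e g"

definition zpow :: "('a \<Rightarrow> 'a \<Rightarrow> 'a) \<Rightarrow> 'a \<Rightarrow> 'a \<Rightarrow> int \<Rightarrow> 'a" where
  "zpow m e x n = (if 0 \<le> n then npow m e x (nat n) else linv m e (npow m e x (nat (- n))))"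

definition infinite_order :: "('a \<Rightarrow> 'a \<Rightarrow> 'a) \<Rightarrow> 'a \<Rightarrow> 'a \<Rightarrow> bool" where
  "infinite_order m e x \<longleftrightarrow> (\<forall>n::nat. n \<ge> 1 \<longrightarrow> npow m e x n \<noteq> e)"

text \<open>A (simple) graph: vertex set and adjacency relation (only its
  restriction to the vertex set matters).\<close>
type_synonym 'v graph = "'v set \<times> ('v \<Rightarrow> 'v \<Rightarrow> bool)"

abbreviation verts :: "'v graph \<Rightarrow> 'v set" where "verts G \<equiv> fst G"
abbreviation adj :: "'v graph \<Rightarrow> 'v \<Rightarrow> 'v \<Rightarrow> bool" where "adj G \<equiv> snd G"

definition zpower_graph :: "('a \<Rightarrow> 'a \<Rightarrow> 'a) \<Rightarrow> 'a \<Rightarrow> 'a graph" where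
  "zpower_graph m e = (UNIV, (\<lambda>x y. x \<noteq> y \<and>
      (\<exists>n::int. n \<noteq> 0 \<and> (y = zpow m e x n \<or> x = zpow m e y n))))"

definition npower_graph :: "('a \<Rightarrow> 'a \<Rightarrow> 'a) \<Rightarrow> 'a \<Rightarrow> 'a graph" where
  "npower_graph m e = (UNIV, (\<lambda>x y. x \<noteq> y \<and>
      (\<exists>n::nat. n > 0 \<and> (y = npow m e x n \<or> x = npow m e y n))))"

definition induced :: "'v graph \<Rightarrow> 'v set \<Rightarrow> 'v graph" where
  "induced G S = (S, (\<lambda>x y. x \<in> S \<and> y \<in> S \<and> adj G x y))"

definition reachable :: "'v graph \<Rightarrow> 'v \<Rightarrow> 'v \<Rightarrow> bool" where
  "reachable G = (\<lambda>x y. x \<in> verts G \<and> y \<in> verts G \<and> adj G x y)\<^sup>*\<^sup>*"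

definition component_of :: "'v graph \<Rightarrow> 'v graph \<Rightarrow> bool" where
  "component_of P G \<longleftrightarrow> (\<exists>x\<in>verts G. P = induced G {y\<in>verts G. reachable G x y})"

definition graph_iso :: "'v graph \<Rightarrow> 'w graph \<Rightarrow> bool" where
  "graph_iso G H \<longleftrightarrow> (\<exists>f. bij_betw f (verts G) (verts H) \<and>
      (\<forall>x\<in>verts G. \<forall>y\<in>verts G. adj G x y \<longleftrightarrow> adj H (f x) (f y)))"

definition strong_product :: "'v graph \<Rightarrow> 'w graph \<Rightarrow> ('v \<times> 'w) graph" where
  "strong_product G H = (verts G \<times> verts H, (\<lambda>(x1, y1) (x2, y2).
      (x1, y1) \<noteq> (x2, y2) \<and> (x1 = x2 \<or> adj G x1 x2) \<and> (y1 = y2 \<or> adj H y1 y2)))"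

definition P2 :: "nat graph" where
  "P2 = ({0, 1}, (\<lambda>x y. x \<noteq> y))"

definition closed_nbhd :: "'v graph \<Rightarrow> 'v \<Rightarrow> 'v set" where
  "closed_nbhd G x = insert x {y\<in>verts G. adj G x y}"

definition nbhd_class :: "'v graph \<Rightarrow> 'v \<Rightarrow> 'v set" where
  "nbhd_class G x = {y\<in>verts G. closed_nbhd G y = closed_nbhd G x}"

definition quotient_graph :: "'v graph \<Rightarrow> 'v graph \<Rightarrow> 'v set graph" where
  "quotient_graph P G = ({C. \<exists>x\<in>verts G. C = nbhd_class G x \<and> C \<subseteq> verts P},
      (\<lambda>C D. C \<noteq> D \<and> (\<exists>a\<in>C. \<exists>b\<in>D. adj G a b)))"

end

theory Submission
  imports Defs
begin

text \<open>Call \<open>x\<close> and \<open>y\<close> commensurable if \<open>x\<^sup>a = y\<^sup>b\<close> for some \<open>a, b > 0\<close>. The components of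
  the \<open>\<nat>\<close>-power graph are exactly the commensurability classes, and the \<open>\<int>\<close>-power component of
  an element \<open>x\<close> of infinite order is the union of the classes of \<open>x\<close> and \<open>x\<^sup>-\<^sup>1\<close>; these are
  disjoint, since \<open>x\<^sup>a = x\<^sup>-\<^sup>b\<close> would give \<open>x\<^sup>a\<^sup>+\<^sup>b = 1\<close>. Inversion maps one class
  isomorphically onto the other, and within one class \<open>\<int>\<close>-adjacency coincides with
  \<open>\<nat>\<close>-adjacency (a negative power would lie in the other class). Hence the \<open>\<int>\<close>-component is
  the strong product of one class with \<open>P\<^sub>2\<close>, the \<open>P\<^sub>2\<close>-coordinate recording the class.
  Finally \<open>x\<close> and \<open>x\<^sup>-\<^sup>1\<close> have the same closed neighbourhood, whereas distinct \<open>a\<close> and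
  \<open>a\<^sup>n\<close> of one class are separated by the neighbour \<open>a\<^sup>n\<^sup>+\<^sup>1\<close> of \<open>a\<close>; so the
  neighbourhood classes are the pairs \<open>{x, x\<^sup>-\<^sup>1}\<close>.\<close>

lemma reachable_UNIV: "verts G = UNIV \<Longrightarrow> reachable G = (adj G)\<^sup>*\<^sup>*"
  unfolding reachable_def by simp

lemma reachable_sym:
  assumes "\<And>x y. adj G x y \<Longrightarrow> adj G y x" and "reachable G x y"
  shows "reachable G y x"
proof -
  have "symp (\<lambda>x y. x \<in> verts G \<and> y \<in> verts G \<and> adj G x y)"
    using assms(1) by (auto intro: sympI)
  then show ?thesis
    using assms(2) unfolding reachable_def by (blast dest: sympD[OF symp_rtranclp])
qed

lemma reachable_mono:
  assumes "verts G \<subseteq> verts H"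
    and "\<And>x y. x \<in> verts G \<Longrightarrow> y \<in> verts G \<Longrightarrow> adj G x y \<Longrightarrow> adj H x y"
    and "reachable G x y"
  shows "reachable H x y"
  using assms(3) unfolding reachable_def
  by (rule rtranclp_mono[THEN predicate2D, rotated]) (use assms(1,2) in auto)

lemma component_of_eq_reachable_from:
  assumes sym: "\<And>x y. adj G x y \<Longrightarrow> adj G y x"
    and "component_of P G" and "x \<in> verts P"
  shows "P = induced G {y \<in> verts G. reachable G x y}"
proof -
  obtain v where v: "P = induced G {y \<in> verts G. reachable G v y}"
    using assms(2) unfolding component_of_def by blast
  have "reachable G v x" using assms(3) v unfolding induced_def by simp
  then have "reachable G v y \<longleftrightarrow> reachable G x y" for y
    using reachable_sym[OF sym] unfolding reachable_def by (meson rtranclp_trans)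
  then show ?thesis using v by simp
qed

locale power_assoc_loop =
  fixes m :: "'a \<Rightarrow> 'a \<Rightarrow> 'a" and e :: 'a
  assumes loop: "loop m e" and power_assoc: "power_assoc m e"
begin

abbreviation pow :: "'a \<Rightarrow> nat \<Rightarrow> 'a" where "pow \<equiv> npow m e"
abbreviation inv\<^sub>L :: "'a \<Rightarrow> 'a" where "inv\<^sub>L \<equiv> linv m e"

lemma mult_left_unit [simp]: "m e x = x" and mult_right_unit [simp]: "m x e = x"
  using loop unfolding loop_def by auto

lemma mult_left_cancel: "m a x = m a y \<Longrightarrow> x = y"
  using loop unfolding loop_def by metis

lemma mult_right_cancel: "m x a = m y a \<Longrightarrow> x = y"
  using loop unfolding loop_def by metis

lemma linv_mult: "m (inv\<^sub>L g) g = e"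
proof -
  have "\<exists>!y. m y g = e" using loop unfolding loop_def by blast
  then show ?thesis unfolding linv_def rdiv_def by (rule theI')
qed

lemma mult_assoc_gen:
  "a \<in> gen m e x \<Longrightarrow> b \<in> gen m e x \<Longrightarrow> c \<in> gen m e x \<Longrightarrow> m (m a b) c = m a (m b c)"
  using power_assoc unfolding power_assoc_def by blast

lemma linv_in_gen: "g \<in> gen m e x \<Longrightarrow> inv\<^sub>L g \<in> gen m e x"
  unfolding linv_def by (intro gen_rdiv gen_unit)

lemma npow_in_gen: "g \<in> gen m e x \<Longrightarrow> pow g n \<in> gen m e x"
  by (induction n) (auto intro: gen_mult gen_unit)

lemma npow_unit [simp]: "pow e n = e"
  by (induction n) auto

lemma npow_add: "pow x (a + b) = m (pow x a) (pow x b)"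
proof (induction b)
  case 0
  then show ?case by simp
next
  case (Suc b)
  have "pow x (a + Suc b) = m (m (pow x a) (pow x b)) x" using Suc by simp
  also have "\<dots> = m (pow x a) (m (pow x b) x)"
    by (intro mult_assoc_gen[where x = x] npow_in_gen gen_base)
  finally show ?case by simp
qed

lemma npow_mult: "pow x (a * b) = pow (pow x a) b"
proof (induction b)
  case 0
  then show ?case by simp
next
  case (Suc b)
  have "pow x (a * Suc b) = m (pow x (a * b)) (pow x a)"
    by (simp add: add.commute npow_add[symmetric])
  then show ?case using Suc by simp
qed

lemma npow_commute: "pow (pow x a) b = pow (pow x b) a"
  by (metis npow_mult mult.commute)

lemma mult_linv: "g \<in> gen m e x \<Longrightarrow> m g (inv\<^sub>L g) = e"
proof -
  assume g: "g \<in> gen m e x"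
  have "m (m g (inv\<^sub>L g)) g = m g (m (inv\<^sub>L g) g)"
    by (intro mult_assoc_gen[where x = x] g linv_in_gen)
  also have "\<dots> = m e g" by (simp add: linv_mult)
  finally show ?thesis by (rule mult_right_cancel)
qed

lemma linv_linv [simp]: "inv\<^sub>L (inv\<^sub>L g) = g"
proof -
  have "m (inv\<^sub>L (inv\<^sub>L g)) (inv\<^sub>L g) = m g (inv\<^sub>L g)"
    using linv_mult mult_linv[OF gen_base] by simp
  then show ?thesis by (rule mult_right_cancel)
qed

lemma linv_eq_iff [simp]: "inv\<^sub>L a = inv\<^sub>L b \<longleftrightarrow> a = b"
  by (metis linv_linv)

lemma npow_linv: "pow (inv\<^sub>L y) k = inv\<^sub>L (pow y k)"
proof -
  have gen: "inv\<^sub>L y \<in> gen m e y" "y \<in> gen m e y" "pow (inv\<^sub>L y) k \<in> gen m e y" "pow y k \<in> gen m e y"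
    for k by (auto intro: linv_in_gen gen_base npow_in_gen)
  have "m (pow (inv\<^sub>L y) k) (pow y k) = e"
  proof (induction k)
    case 0
    then show ?case by simp
  next
    case (Suc k)
    have "pow y (Suc k) = m y (pow y k)"
      using npow_add[of y 1 k] by simp
    then have "m (pow (inv\<^sub>L y) (Suc k)) (pow y (Suc k))
        = m (pow (inv\<^sub>L y) k) (m (m (inv\<^sub>L y) y) (pow y k))"
      using gen by (simp add: mult_assoc_gen[where x = y] gen_mult)
    then show ?case using Suc by (simp add: linv_mult)
  qed
  then show ?thesis using linv_mult by (metis mult_right_cancel)
qed

lemma npow_inj:
  assumes "infinite_order m e x" and "pow x a = pow x b"
  shows "a = b"
proof -
  have "pow x c \<noteq> pow x (c + d)" if "d \<ge> 1" for c d
  proof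
    assume "pow x c = pow x (c + d)"
    then have "m (pow x c) e = m (pow x c) (pow x d)" by (simp add: npow_add)
    then have "pow x d = e" by (metis mult_left_cancel)
    then show False using assms(1) that unfolding infinite_order_def by blast
  qed
  from this[where c = a and d = "b - a"] this[where c = b and d = "a - b"] show ?thesis
    using assms(2) by (cases a b rule: linorder_cases) (auto simp: Suc_le_eq)
qed

definition npower_rel :: "'a \<Rightarrow> 'a \<Rightarrow> bool" where
  "npower_rel x y \<longleftrightarrow> (\<exists>n. n > 0 \<and> (y = pow x n \<or> x = pow y n))"

definition zpower_rel :: "'a \<Rightarrow> 'a \<Rightarrow> bool" where
  "zpower_rel x y \<longleftrightarrow> (\<exists>n::int. n \<noteq> 0 \<and> (y = zpow m e x n \<or> x = zpow m e y n))"

definition commensurable :: "'a \<Rightarrow> 'a \<Rightarrow> bool" where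
  "commensurable x y \<longleftrightarrow> (\<exists>a b. a > 0 \<and> b > 0 \<and> pow x a = pow y b)"

lemma npower_graph_adj: "adj (npower_graph m e) x y \<longleftrightarrow> x \<noteq> y \<and> npower_rel x y"
  unfolding npower_graph_def npower_rel_def by simp

lemma zpower_graph_adj: "adj (zpower_graph m e) x y \<longleftrightarrow> x \<noteq> y \<and> zpower_rel x y"
  unfolding zpower_graph_def zpower_rel_def by simp

lemma npower_graph_verts [simp]: "verts (npower_graph m e) = UNIV"
  unfolding npower_graph_def by simp

lemma zpower_graph_verts [simp]: "verts (zpower_graph m e) = UNIV"
  unfolding zpower_graph_def by simp

lemma zpower_rel_iff:
  "zpower_rel x y \<longleftrightarrow>
    (\<exists>k>0. y = pow x k \<or> x = pow y k \<or> y = inv\<^sub>L (pow x k) \<or> x = inv\<^sub>L (pow y k))"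
proof
  assume "zpower_rel x y"
  then obtain n :: int where n: "n \<noteq> 0" "y = zpow m e x n \<or> x = zpow m e y n"
    unfolding zpower_rel_def by blast
  show "\<exists>k>0. y = pow x k \<or> x = pow y k \<or> y = inv\<^sub>L (pow x k) \<or> x = inv\<^sub>L (pow y k)"
    using n by (intro exI[of _ "nat \<bar>n\<bar>"]) (auto simp: zpow_def split: if_splits)
next
  assume "\<exists>k>0. y = pow x k \<or> x = pow y k \<or> y = inv\<^sub>L (pow x k) \<or> x = inv\<^sub>L (pow y k)"
  then obtain k where k: "k > 0"
    "y = pow x k \<or> x = pow y k \<or> y = inv\<^sub>L (pow x k) \<or> x = inv\<^sub>L (pow y k)" by blast
  have "zpow m e z (int k) = pow z k" "zpow m e z (- int k) = inv\<^sub>L (pow z k)" for z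
    using k(1) by (simp_all add: zpow_def)
  moreover have "int k \<noteq> 0" "- int k \<noteq> 0" using k(1) by simp_all
  ultimately show "zpower_rel x y" unfolding zpower_rel_def using k(2) by metis
qed

lemma zpower_rel_sym: "zpower_rel x y \<Longrightarrow> zpower_rel y x"
  unfolding zpower_rel_iff by blast

lemma zpower_rel_refl [simp]: "zpower_rel x x"
  unfolding zpower_rel_iff by (intro exI[of _ 1]) simp

lemma npower_rel_refl [simp]: "npower_rel x x"
  unfolding npower_rel_def by (intro exI[of _ 1]) simp

lemma npower_rel_imp_zpower_rel: "npower_rel x y \<Longrightarrow> zpower_rel x y"
  unfolding zpower_rel_iff npower_rel_def by blast

lemma zpower_rel_linv_left [simp]: "zpower_rel (inv\<^sub>L x) y \<longleftrightarrow> zpower_rel x y"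
proof -
  have "zpower_rel (inv\<^sub>L x) y \<Longrightarrow> zpower_rel x y" for x
    unfolding zpower_rel_iff by (auto simp: npow_linv) (metis linv_linv)+
  from this[of x] this[of "inv\<^sub>L x"] show ?thesis by auto
qed

lemma zpower_rel_linv_right [simp]: "zpower_rel x (inv\<^sub>L y) \<longleftrightarrow> zpower_rel x y"
  using zpower_rel_linv_left zpower_rel_sym by blast

lemma commensurable_refl [simp]: "commensurable x x"
  unfolding commensurable_def by (intro exI[of _ 1]) simp

lemma commensurable_sym: "commensurable x y \<Longrightarrow> commensurable y x"
  unfolding commensurable_def by metis

lemma commensurable_trans:
  assumes "commensurable x y" and "commensurable y z"
  shows "commensurable x z"
proof -
  obtain a b where ab: "a > 0" "b > 0" "pow x a = pow y b"
    using assms(1) unfolding commensurable_def by blast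
  obtain c d where cd: "c > 0" "d > 0" "pow y c = pow z d"
    using assms(2) unfolding commensurable_def by blast
  have "pow x (a * c) = pow z (d * b)"
    by (metis ab(3) cd(3) npow_mult npow_commute)
  then show ?thesis
    unfolding commensurable_def using ab cd by (intro exI[of _ "a * c"] exI[of _ "d * b"]) simp
qed

lemma commensurable_linv: "commensurable x y \<Longrightarrow> commensurable (inv\<^sub>L x) (inv\<^sub>L y)"
  unfolding commensurable_def by (metis npow_linv)

lemma commensurable_npow: "k > 0 \<Longrightarrow> commensurable x (pow x k)"
  unfolding commensurable_def by (rule exI[of _ k], rule exI[of _ 1]) simp

lemma npower_rel_imp_commensurable: "npower_rel x y \<Longrightarrow> commensurable x y"
  unfolding npower_rel_def by (metis commensurable_npow commensurable_sym)

lemma zpower_rel_imp_commensurable: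
  "zpower_rel y z \<Longrightarrow> commensurable y z \<or> commensurable (inv\<^sub>L y) z"
  unfolding zpower_rel_iff
  by (metis commensurable_npow commensurable_sym linv_linv npow_linv)

lemma commensurable_infinite_order:
  assumes "infinite_order m e x" and "commensurable x y"
  shows "infinite_order m e y"
  unfolding infinite_order_def
proof (intro allI impI notI)
  fix k :: nat
  assume k: "k \<ge> 1" "pow y k = e"
  obtain a b where ab: "a > 0" "pow x a = pow y b"
    using assms(2) unfolding commensurable_def by blast
  have "pow x (a * k) = e" by (metis ab(2) k(2) npow_mult npow_commute npow_unit)
  then show False using assms(1) ab k unfolding infinite_order_def by simp
qed

lemma not_commensurable_linv:
  assumes "infinite_order m e x"
  shows "\<not> commensurable x (inv\<^sub>L x)"
proof
  assume "commensurable x (inv\<^sub>L x)"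
  then obtain a b where ab: "a > 0" "b > 0" "pow x a = pow (inv\<^sub>L x) b"
    unfolding commensurable_def by blast
  have "pow x (a + b) = m (inv\<^sub>L (pow x b)) (pow x b)"
    by (simp add: npow_add ab(3) npow_linv)
  then have "pow x (a + b) = e" by (simp add: linv_mult)
  then show False using assms ab unfolding infinite_order_def by simp
qed

lemma reachable_npower_graph_iff: "reachable (npower_graph m e) x y \<longleftrightarrow> commensurable x y"
proof
  assume "reachable (npower_graph m e) x y"
  then show "commensurable x y"
    unfolding reachable_UNIV[OF npower_graph_verts]
    by (induction rule: rtranclp_induct)
      (auto simp: npower_graph_adj dest: npower_rel_imp_commensurable intro: commensurable_trans)
next
  assume "commensurable x y"
  then obtain a b where ab: "a > 0" "b > 0" "pow x a = pow y b"
    unfolding commensurable_def by blast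
  have sym: "symp (adj (npower_graph m e))"
    by (auto intro!: sympI simp: npower_graph_adj npower_rel_def)
  have to_power: "(adj (npower_graph m e))\<^sup>*\<^sup>* u (pow u k)" if "k > 0" for u k
    using that by (cases "u = pow u k")
      (auto simp: npower_graph_adj npower_rel_def intro!: r_into_rtranclp)
  have "(adj (npower_graph m e))\<^sup>*\<^sup>* (pow y b) y"
    using sympD[OF symp_rtranclp[OF sym] to_power[OF ab(2)]] .
  then show "reachable (npower_graph m e) x y"
    unfolding reachable_UNIV[OF npower_graph_verts]
    using to_power[OF ab(1)] ab(3) by (metis rtranclp_trans)
qed

end

locale infinite_order_element = power_assoc_loop +
  fixes x\<^sub>0 :: 'a
  assumes infinite_order: "infinite_order m e x\<^sub>0"
begin

definition pos_class :: "'a set" where "pos_class = {y. commensurable x\<^sub>0 y}"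

definition neg_class :: "'a set" where "neg_class = {y. commensurable (inv\<^sub>L x\<^sub>0) y}"

definition component :: "'a set" where "component = pos_class \<union> neg_class"

definition rep :: "'a \<Rightarrow> 'a" where "rep z = (if z \<in> pos_class then z else inv\<^sub>L z)"

lemma linv_mem_neg_class_iff: "inv\<^sub>L y \<in> neg_class \<longleftrightarrow> y \<in> pos_class"
  unfolding pos_class_def neg_class_def by (metis commensurable_linv linv_linv mem_Collect_eq)

lemma linv_mem_pos_class_iff: "inv\<^sub>L y \<in> pos_class \<longleftrightarrow> y \<in> neg_class"
  using linv_mem_neg_class_iff[of "inv\<^sub>L y"] by simp

lemma pos_neg_class_disjoint: "pos_class \<inter> neg_class = {}"
  unfolding pos_class_def neg_class_def
  using not_commensurable_linv[OF infinite_order] by (auto intro: commensurable_sym commensurable_trans)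

lemma pos_class_infinite_order: "y \<in> pos_class \<Longrightarrow> infinite_order m e y"
  unfolding pos_class_def using commensurable_infinite_order[OF infinite_order] by blast

lemma component_zpower_closed:
  assumes "y \<in> component" and "zpower_rel y z"
  shows "z \<in> component"
proof -
  have "commensurable x\<^sub>0 y \<or> commensurable x\<^sub>0 (inv\<^sub>L y)"
    using assms(1) commensurable_linv unfolding component_def pos_class_def neg_class_def by force
  then have "commensurable x\<^sub>0 z \<or> commensurable (inv\<^sub>L x\<^sub>0) z"
    using zpower_rel_imp_commensurable[OF assms(2)] commensurable_linv
    by (metis commensurable_trans linv_linv)
  then show ?thesis unfolding component_def pos_class_def neg_class_def by blast
qed

text \<open>A relation \<open>a = (b\<^sup>k)\<^sup>-\<^sup>1\<close> would put \<open>a\<close> and \<open>b\<close> into opposite classes.\<close>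

lemma zpower_rel_pos_class_iff:
  assumes "a \<in> pos_class" and "b \<in> pos_class"
  shows "zpower_rel a b \<longleftrightarrow> npower_rel a b"
proof
  assume "zpower_rel a b"
  then obtain k where k: "k > 0"
    "b = pow a k \<or> a = pow b k \<or> b = inv\<^sub>L (pow a k) \<or> a = inv\<^sub>L (pow b k)"
    unfolding zpower_rel_iff by blast
  have "v \<in> neg_class" if "u \<in> pos_class" "v = inv\<^sub>L (pow u k)" for u v
  proof -
    have "commensurable (inv\<^sub>L u) v"
      unfolding that(2) npow_linv[symmetric] by (rule commensurable_npow[OF k(1)])
    then show ?thesis
      using that(1) linv_mem_neg_class_iff unfolding neg_class_def by (blast intro: commensurable_trans)
  qed
  then show "npower_rel a b"
    using k assms pos_neg_class_disjoint unfolding npower_rel_def by blast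
qed (rule npower_rel_imp_zpower_rel)

lemma rep_mem_pos_class: "z \<in> component \<Longrightarrow> rep z \<in> pos_class"
  using linv_mem_pos_class_iff unfolding rep_def component_def by auto

lemma rep_cases: "z = rep z \<or> z = inv\<^sub>L (rep z)"
  unfolding rep_def by auto

lemma zpower_rel_rep_iff [simp]: "zpower_rel (rep z) w \<longleftrightarrow> zpower_rel z w"
  unfolding rep_def by auto

lemma rep_pos_class: "a \<in> pos_class \<Longrightarrow> rep a = a"
  unfolding rep_def by simp

lemma rep_neg_class: "a \<in> neg_class \<Longrightarrow> rep a = inv\<^sub>L a"
  unfolding rep_def using pos_neg_class_disjoint by auto

text \<open>The neighbour \<open>a\<^sup>n\<^sup>+\<^sup>1\<close> of \<open>a\<close> is not a neighbour of \<open>a\<^sup>n\<close> when \<open>n \<ge> 2\<close>: otherwise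
  \<open>n + 1 = n k\<close> or \<open>n = (n + 1) k\<close>.\<close>

lemma eq_npow_if_same_zpower_nbhd:
  assumes "a \<in> pos_class" and "\<forall>w. zpower_rel a w \<longleftrightarrow> zpower_rel (pow a n) w" and "n > 0"
  shows "pow a n = a"
proof (rule ccontr)
  assume ne: "pow a n \<noteq> a"
  then have n2: "n \<ge> 2" using assms(3) by (cases "n = 1") auto
  define z where "z = pow a (n + 1)"
  have "zpower_rel a z" unfolding zpower_rel_iff z_def by (intro exI[of _ "n + 1"]) simp
  then have "zpower_rel (pow a n) z" using assms(2) by simp
  moreover have "z \<in> pos_class" "pow a n \<in> pos_class"
    using assms(1) commensurable_npow[of "n + 1" a] commensurable_npow[OF assms(3), of a]
    unfolding pos_class_def z_def by (auto intro: commensurable_trans)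
  ultimately obtain k where k: "k > 0" "z = pow (pow a n) k \<or> pow a n = pow z k"
    using zpower_rel_pos_class_iff unfolding npower_rel_def by blast
  have inj: "pow a i = pow a j \<Longrightarrow> i = j" for i j
    using npow_inj[OF pos_class_infinite_order[OF assms(1)]] .
  from k(2) have "pow a (n + 1) = pow a (n * k) \<or> pow a n = pow a ((n + 1) * k)"
    unfolding z_def by (simp only: npow_mult)
  then have "n + 1 = n * k \<or> n = (n + 1) * k" using inj by blast
  moreover have "n * k \<noteq> n + 1"
  proof (cases "k = 1")
    case False
    then have "n * 2 \<le> n * k" using k(1) by simp
    then show ?thesis using n2 by linarith
  qed simp
  ultimately show False using k(1) by (cases k) auto
qed

lemma eq_if_same_zpower_nbhd:
  assumes "a \<in> pos_class" and "b \<in> pos_class" and "\<forall>w. zpower_rel a w \<longleftrightarrow> zpower_rel b w"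
  shows "a = b"
proof -
  have "zpower_rel a b" using assms(3) zpower_rel_refl by blast
  then have "npower_rel a b" using assms(1,2) zpower_rel_pos_class_iff by blast
  then obtain n where "n > 0" "b = pow a n \<or> a = pow b n" unfolding npower_rel_def by blast
  then show ?thesis
    using eq_npow_if_same_zpower_nbhd[OF assms(1)] eq_npow_if_same_zpower_nbhd[OF assms(2)] assms(3)
    by metis
qed

lemma closed_nbhd_zpower_graph: "closed_nbhd (zpower_graph m e) x = {y. zpower_rel x y}"
  unfolding closed_nbhd_def zpower_graph_adj by auto

lemma nbhd_class_zpower_graph:
  assumes "x \<in> component"
  shows "nbhd_class (zpower_graph m e) x = {x, inv\<^sub>L x}"
proof -
  have "y \<in> {x, inv\<^sub>L x}" if "{w. zpower_rel y w} = {w. zpower_rel x w}" for y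
  proof -
    have "y \<in> component"
      using that component_zpower_closed[OF assms] by (metis zpower_rel_refl mem_Collect_eq)
    moreover have "\<forall>w. zpower_rel (rep x) w \<longleftrightarrow> zpower_rel (rep y) w"
      using that by (auto simp: set_eq_iff)
    ultimately have "rep x = rep y"
      using eq_if_same_zpower_nbhd rep_mem_pos_class assms by blast
    then show ?thesis using rep_cases[of x] rep_cases[of y] by (metis insertI1 insertI2 linv_linv)
  qed
  then show ?thesis unfolding nbhd_class_def closed_nbhd_zpower_graph by auto
qed

lemma reachable_zpower_graph_iff: "reachable (zpower_graph m e) x\<^sub>0 y \<longleftrightarrow> y \<in> component"
proof
  assume "reachable (zpower_graph m e) x\<^sub>0 y"
  moreover have "x\<^sub>0 \<in> component" unfolding component_def pos_class_def by simp
  ultimately show "y \<in> component"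
    unfolding reachable_UNIV[OF zpower_graph_verts]
    by (induction rule: rtranclp_induct) (auto simp: zpower_graph_adj intro: component_zpower_closed)
next
  have from_npower: "reachable (zpower_graph m e) x y" if "commensurable x y" for x y
    by (rule reachable_mono[of "npower_graph m e"]) (use that in
      \<open>auto simp: npower_graph_adj zpower_graph_adj npower_rel_imp_zpower_rel reachable_npower_graph_iff\<close>)
  have "adj (zpower_graph m e) x\<^sub>0 (inv\<^sub>L x\<^sub>0)"
    using not_commensurable_linv[OF infinite_order] by (auto simp: zpower_graph_adj)
  then have "reachable (zpower_graph m e) x\<^sub>0 (inv\<^sub>L x\<^sub>0)"
    unfolding reachable_UNIV[OF zpower_graph_verts] by blast
  moreover assume "y \<in> component"
  ultimately show "reachable (zpower_graph m e) x\<^sub>0 y"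
    using from_npower unfolding component_def pos_class_def neg_class_def reachable_def
    by (auto intro: rtranclp_trans)
qed

lemma component_of_pos_class: "component_of (induced (npower_graph m e) pos_class) (npower_graph m e)"
  unfolding component_of_def pos_class_def reachable_npower_graph_iff by auto

lemma component_of_neg_class: "component_of (induced (npower_graph m e) neg_class) (npower_graph m e)"
  unfolding component_of_def neg_class_def reachable_npower_graph_iff by auto

lemma graph_iso_pos_neg_class:
  "graph_iso (induced (npower_graph m e) pos_class) (induced (npower_graph m e) neg_class)"
  unfolding graph_iso_def induced_def fst_conv snd_conv
proof (intro exI conjI ballI)
  show "bij_betw inv\<^sub>L pos_class neg_class"
    by (rule bij_betw_byWitness[where f' = inv\<^sub>L])
      (auto simp: linv_mem_neg_class_iff linv_mem_pos_class_iff)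
  have "npower_rel (inv\<^sub>L x) (inv\<^sub>L y)" if "npower_rel x y" for x y
    using that unfolding npower_rel_def by (auto simp: npow_linv)
  then show "(x \<in> pos_class \<and> y \<in> pos_class \<and> adj (npower_graph m e) x y) \<longleftrightarrow>
      (inv\<^sub>L x \<in> neg_class \<and> inv\<^sub>L y \<in> neg_class \<and> adj (npower_graph m e) (inv\<^sub>L x) (inv\<^sub>L y))"
    if "x \<in> pos_class" "y \<in> pos_class" for x y
    using that by (auto simp: npower_graph_adj linv_mem_neg_class_iff) (metis linv_linv)
qed

definition sheet :: "'a \<Rightarrow> nat" where "sheet z = (if z \<in> pos_class then 0 else 1)"

lemma bij_betw_rep_sheet:
  "bij_betw (\<lambda>z. (rep z, sheet z)) component (pos_class \<times> {0, 1})"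
proof (rule bij_betw_byWitness[where f' = "\<lambda>(y, i). if i = 0 then y else inv\<^sub>L y"])
  show "\<forall>z \<in> component. (\<lambda>(y, i). if i = 0 then y else inv\<^sub>L y) (rep z, sheet z) = z"
  proof
    fix z assume "z \<in> component"
    then consider "z \<in> pos_class" | "z \<in> neg_class" "z \<notin> pos_class"
      unfolding component_def by blast
    then show "(\<lambda>(y, i). if i = 0 then y else inv\<^sub>L y) (rep z, sheet z) = z"
      by cases (simp_all add: sheet_def rep_pos_class rep_neg_class)
  qed
  have "(rep (if i = 0 then y else inv\<^sub>L y), sheet (if i = 0 then y else inv\<^sub>L y)) = (y, i)"
    if y: "y \<in> pos_class" and "i \<in> {0, 1}" for y and i :: nat
  proof -
    have "inv\<^sub>L y \<notin> pos_class" "rep (inv\<^sub>L y) = y"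
      using y linv_mem_neg_class_iff pos_neg_class_disjoint rep_neg_class by auto
    then show ?thesis using that by (auto simp: sheet_def rep_pos_class)
  qed
  then show "\<forall>p \<in> pos_class \<times> {0, 1}. (\<lambda>z. (rep z, sheet z)) ((\<lambda>(y, i). if i = 0 then y else inv\<^sub>L y) p) = p"
    by auto
  show "(\<lambda>z. (rep z, sheet z)) ` component \<subseteq> pos_class \<times> {0, 1}"
    using rep_mem_pos_class by (auto simp: sheet_def)
  show "(\<lambda>(y, i). if i = 0 then y else inv\<^sub>L y) ` (pos_class \<times> {0, 1}) \<subseteq> component"
    unfolding component_def by (auto simp: linv_mem_neg_class_iff)
qed

text \<open>\<open>\<int>\<close>-adjacency within the component only depends on \<open>rep\<close>; the \<open>sheet\<close> coordinate
  separates \<open>z\<close> from \<open>z\<^sup>-\<^sup>1\<close>.\<close>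

lemma graph_iso_component_strong_product:
  "graph_iso (induced (zpower_graph m e) component)
    (strong_product (induced (npower_graph m e) pos_class) P2)"
proof -
  let ?f = "\<lambda>z. (rep z, sheet z)"
  have verts: "verts (strong_product (induced (npower_graph m e) pos_class) P2) = pos_class \<times> {0, 1}"
    unfolding strong_product_def induced_def P2_def by simp
  have "adj (induced (zpower_graph m e) component) z w \<longleftrightarrow>
      adj (strong_product (induced (npower_graph m e) pos_class) P2) (?f z) (?f w)"
    if zw: "z \<in> component" "w \<in> component" for z w
  proof -
    have rep: "rep z \<in> pos_class" "rep w \<in> pos_class" using rep_mem_pos_class zw by auto
    have "?f z = ?f w \<longleftrightarrow> z = w"
      using bij_betw_rep_sheet zw unfolding bij_betw_def inj_on_def by blast
    moreover have "zpower_rel z w \<longleftrightarrow> zpower_rel (rep z) (rep w)"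
      using zpower_rel_sym by (metis zpower_rel_rep_iff)
    ultimately show ?thesis
      using zw rep zpower_rel_pos_class_iff[OF rep] unfolding strong_product_def induced_def P2_def
      by (auto simp: zpower_graph_adj npower_graph_adj)
  qed
  then show ?thesis
    unfolding graph_iso_def verts using bij_betw_rep_sheet by (auto simp: induced_def)
qed

lemma quotient_graph_component_verts:
  "verts (quotient_graph (induced (zpower_graph m e) component) (zpower_graph m e))
    = (\<lambda>x. {x, inv\<^sub>L x}) ` pos_class"
proof -
  have "{C. \<exists>x. C = nbhd_class (zpower_graph m e) x \<and> C \<subseteq> component}
      = (\<lambda>x. {x, inv\<^sub>L x}) ` pos_class"
  proof (intro equalityI subsetI)
    fix C assume "C \<in> {C. \<exists>x. C = nbhd_class (zpower_graph m e) x \<and> C \<subseteq> component}"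
    then obtain x where x: "C = nbhd_class (zpower_graph m e) x" "C \<subseteq> component" by blast
    moreover have "x \<in> C" unfolding x(1) nbhd_class_def by simp
    ultimately have "x \<in> component" "C = {x, inv\<^sub>L x}" using nbhd_class_zpower_graph by auto
    moreover have "{x, inv\<^sub>L x} = {rep x, inv\<^sub>L (rep x)}" using rep_cases[of x] by (metis insert_commute linv_linv)
    ultimately show "C \<in> (\<lambda>x. {x, inv\<^sub>L x}) ` pos_class" using rep_mem_pos_class by blast
  next
    fix C assume "C \<in> (\<lambda>x. {x, inv\<^sub>L x}) ` pos_class"
    then obtain x where "x \<in> pos_class" "C = {x, inv\<^sub>L x}" by blast
    then show "C \<in> {C. \<exists>x. C = nbhd_class (zpower_graph m e) x \<and> C \<subseteq> component}"
      using nbhd_class_zpower_graph linv_mem_neg_class_iff unfolding component_def by blast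
  qed
  then show ?thesis unfolding quotient_graph_def induced_def by simp
qed

lemma graph_iso_pos_class_quotient:
  "graph_iso (induced (npower_graph m e) pos_class)
    (quotient_graph (induced (zpower_graph m e) component) (zpower_graph m e))"
proof -
  let ?h = "\<lambda>x. {x, inv\<^sub>L x}"
  have inj: "?h x = ?h y \<longleftrightarrow> x = y" if "x \<in> pos_class" "y \<in> pos_class" for x y
    using that linv_mem_neg_class_iff pos_neg_class_disjoint by (auto simp: doubleton_eq_iff)
  have "adj (induced (npower_graph m e) pos_class) x y \<longleftrightarrow>
      adj (quotient_graph (induced (zpower_graph m e) component) (zpower_graph m e)) (?h x) (?h y)"
    if xy: "x \<in> pos_class" "y \<in> pos_class" for x y
  proof -
    have "(\<exists>a \<in> ?h x. \<exists>b \<in> ?h y. adj (zpower_graph m e) a b) \<longleftrightarrow> x \<noteq> y \<and> zpower_rel x y"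
      if "x \<noteq> y" using that inj[OF xy] by (auto simp: zpower_graph_adj)
    then show ?thesis
      using xy inj[OF xy] zpower_rel_pos_class_iff[OF xy]
      unfolding quotient_graph_def induced_def by (auto simp: npower_graph_adj)
  qed
  moreover have "bij_betw ?h pos_class (?h ` pos_class)"
    using inj by (auto simp: bij_betw_def inj_on_def)
  ultimately show ?thesis
    unfolding graph_iso_def quotient_graph_component_verts by (auto simp: induced_def)
qed

end

theorem mainTheorem4:
  fixes m :: "'a \<Rightarrow> 'a \<Rightarrow> 'a" and e :: 'a and \<Phi> :: "'a graph"
  assumes "loop m e" and "power_assoc m e"
    and "component_of \<Phi> (zpower_graph m e)"
    and "\<exists>x\<in>verts \<Phi>. infinite_order m e x"
  shows "\<exists>\<Psi>1 \<Psi>2. component_of \<Psi>1 (npower_graph m e) \<and> component_of \<Psi>2 (npower_graph m e)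
    \<and> verts \<Phi> = verts \<Psi>1 \<union> verts \<Psi>2
    \<and> graph_iso \<Psi>1 \<Psi>2
    \<and> graph_iso \<Phi> (strong_product \<Psi>1 P2)
    \<and> graph_iso \<Psi>1 (quotient_graph \<Phi> (zpower_graph m e))"
proof -
  obtain x\<^sub>0 where x\<^sub>0: "x\<^sub>0 \<in> verts \<Phi>" "infinite_order m e x\<^sub>0" using assms(4) by blast
  interpret infinite_order_element m e x\<^sub>0
    using assms(1,2) x\<^sub>0(2) by unfold_locales
  have "adj (zpower_graph m e) x y \<Longrightarrow> adj (zpower_graph m e) y x" for x y
    by (auto simp: zpower_graph_adj intro: zpower_rel_sym)
  then have "\<Phi> = induced (zpower_graph m e) {y. reachable (zpower_graph m e) x\<^sub>0 y}"
    using component_of_eq_reachable_from[OF _ assms(3) x\<^sub>0(1)] by simp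
  then have \<Phi>: "\<Phi> = induced (zpower_graph m e) component"
    by (simp add: reachable_zpower_graph_iff)
  show ?thesis unfolding \<Phi>
  proof (intro exI conjI)
    show "verts (induced (zpower_graph m e) component)
        = verts (induced (npower_graph m e) pos_class) \<union> verts (induced (npower_graph m e) neg_class)"
      unfolding induced_def component_def by simp
  qed (fact component_of_pos_class component_of_neg_class graph_iso_pos_neg_class
      graph_iso_component_strong_product graph_iso_pos_class_quotient)+
qed

end
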